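(* Let $q'>0$, $e'\in(0,1)$, $q_{\max}>0$, $\mathcal D_1=\{(e,\omega'):0\le e\le1,\ 0\le\omega'\le\pi\}$, $\mathcal D_2=\{(q,\omega):0<q\le q_{\max},\ 0\le\omega\le\pi/2\}$. Then: (i) for each $(q,\omega)\in\mathcal D_2$ and $(e,\omega')\in\mathcal D_1$, $$\delta_{\rm int}(q,e,\omega,\omega')\ge\delta_{\rm int}(q,1,\omega,\pi)=q'-\frac{2q}{1-\cos\omega},\qquad \delta_{\rm ext}(q,e,\omega,\omega')\ge\delta_{\rm ext}(q,0,\omega,\pi)=q-Q';$$ consequently, for given $(q,\omega)\in\mathcal D_2$, the configuration has internal nodes for every $(e,\omega')\in\mathcal D_1$ iff $q'-\frac{2q}{1-\cos\omega}>0$, and external nodes for every $(e,\omega')\in\mathcal D_1$ iff $q-Q'>0$; (ii) if $(q,\omega)\in\mathcal D_2$ satisfies $q'-\frac{2q}{1-\cos\omega}\le0$ and $q-Q'\le0$, then there exists $(e,\omega')\in\mathcal D_1$ with $d^+d^-=0$.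
   Context: For $q>0$, $e\in[0,1]$ and angles $\omega,\omega'$, define $r_{\pm}=\frac{q(1+e)}{1\pm e\cos\omega}$, $r'_{\pm}=\frac{q'(1+e')}{1\pm e'\cos\omega'}$ (extended-real values allowed), $d^+=r'_+-r_+$, $d^-=r'_--r_-$, $\delta_{\rm int}=\min\{d^+,d^-\}$, $\delta_{\rm ext}=\min\{-d^+,-d^-\}$, $Q'=\frac{q'(1+e')}{1-e'}$. Internal nodes means $d^+>0$ and $d^->0$; external nodes means $d^+<0$ and $d^-<0$. *)

theory Defs
  imports "HOL-Analysis.Analysis"
begin

text \<open>Extended-real radii: division by zero in ereal gives infinity times numerator
 (inverse 0 = infinity), so r = +infinity when the denominator vanishes and q(1+e) > 0.\<close>

definition r_plus :: "real \<Rightarrow> real \<Rightarrow> real \<Rightarrow> ereal" where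
  "r_plus q e \<omega> = ereal (q * (1 + e)) / ereal (1 + e * cos \<omega>)"

definition r_minus :: "real \<Rightarrow> real \<Rightarrow> real \<Rightarrow> ereal" where
  "r_minus q e \<omega> = ereal (q * (1 + e)) / ereal (1 - e * cos \<omega>)"

definition d_plus :: "real \<Rightarrow> real \<Rightarrow> real \<Rightarrow> real \<Rightarrow> real \<Rightarrow> real \<Rightarrow> ereal" where
  "d_plus q' e' q e \<omega> \<omega>' = r_plus q' e' \<omega>' - r_plus q e \<omega>"

definition d_minus :: "real \<Rightarrow> real \<Rightarrow> real \<Rightarrow> real \<Rightarrow> real \<Rightarrow> real \<Rightarrow> ereal" where
  "d_minus q' e' q e \<omega> \<omega>' = r_minus q' e' \<omega>' - r_minus q e \<omega>"

definition delta_int :: "real \<Rightarrow> real \<Rightarrow> real \<Rightarrow> real \<Rightarrow> real \<Rightarrow> real \<Rightarrow> ereal" where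
  "delta_int q' e' q e \<omega> \<omega>' = min (d_plus q' e' q e \<omega> \<omega>') (d_minus q' e' q e \<omega> \<omega>')"

definition delta_ext :: "real \<Rightarrow> real \<Rightarrow> real \<Rightarrow> real \<Rightarrow> real \<Rightarrow> real \<Rightarrow> ereal" where
  "delta_ext q' e' q e \<omega> \<omega>' = min (- d_plus q' e' q e \<omega> \<omega>') (- d_minus q' e' q e \<omega> \<omega>')"

definition Qprime :: "real \<Rightarrow> real \<Rightarrow> real" where
  "Qprime q' e' = q' * (1 + e') / (1 - e')"

definition internal_nodes :: "real \<Rightarrow> real \<Rightarrow> real \<Rightarrow> real \<Rightarrow> real \<Rightarrow> real \<Rightarrow> bool" where
  "internal_nodes q' e' q e \<omega> \<omega>' \<longleftrightarrow> d_plus q' e' q e \<omega> \<omega>' > 0 \<and> d_minus q' e' q e \<omega> \<omega>' > 0"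

definition external_nodes :: "real \<Rightarrow> real \<Rightarrow> real \<Rightarrow> real \<Rightarrow> real \<Rightarrow> real \<Rightarrow> bool" where
  "external_nodes q' e' q e \<omega> \<omega>' \<longleftrightarrow> d_plus q' e' q e \<omega> \<omega>' < 0 \<and> d_minus q' e' q e \<omega> \<omega>' < 0"

definition D1 :: "(real \<times> real) set" where
  "D1 = {(e, \<omega>'). 0 \<le> e \<and> e \<le> 1 \<and> 0 \<le> \<omega>' \<and> \<omega>' \<le> pi}"

definition D2 :: "real \<Rightarrow> (real \<times> real) set" where
  "D2 qmax = {(q, \<omega>). 0 < q \<and> q \<le> qmax \<and> 0 \<le> \<omega> \<and> \<omega> \<le> pi / 2}"

end

theory Submission
  imports Defs
begin

text \<open>
  If \<open>0 \<le> cos \<omega>\<close> and \<open>0 \<le> e \<le> 1\<close>, both nodal radii of the second orbit lie between \<open>q\<close> and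
  \<open>2q / (1 - cos \<omega>)\<close>, the upper value being \<open>r\<^sub>-\<close> of the parabolic orbit; those of the elliptic
  first orbit lie between \<open>q'\<close> and \<open>Q'\<close>. Hence \<open>d\<^sup>\<plusminus> \<ge> q' - 2q/(1 - cos \<omega>)\<close> and
  \<open>-d\<^sup>\<plusminus> \<ge> q - Q'\<close>, with equality for the minimum at \<open>(e, \<omega>') = (1, \<pi>)\<close> resp. \<open>(0, \<pi>)\<close>.
  When both bounds are \<open>\<le> 0\<close>, \<open>d\<^sup>-\<close> has a zero in \<open>D1\<close>: for \<open>q \<ge> q'\<close> take the circular orbit
  and choose \<open>\<omega>'\<close> with \<open>r'\<^sub>- = q\<close> (as \<open>r'\<^sub>-\<close> sweeps \<open>[q', Q']\<close>); for \<open>q < q'\<close> keep \<open>\<omega>' = \<pi>\<close>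
  and solve \<open>r\<^sub>-(e) = q'\<close>, as \<open>r\<^sub>-\<close> increases from \<open>q\<close> to \<open>2q/(1 - cos \<omega>)\<close> on \<open>[0, 1]\<close>.
\<close>

lemma r_minus_eq_r_plus_opposite: "r_minus q e \<omega> = r_plus q e (\<omega> + pi)"
  by (simp add: r_minus_def r_plus_def)

lemma r_plus_pi: "e < 1 \<Longrightarrow> r_plus q e pi = ereal (Qprime q e)"
  by (simp add: r_plus_def Qprime_def)

lemma r_minus_pi: "-1 < e \<Longrightarrow> r_minus q e pi = ereal q"
  by (simp add: r_minus_def)

lemma r_plus_circular: "r_plus q 0 \<omega> = ereal q"
  and r_minus_circular: "r_minus q 0 \<omega> = ereal q"
  by (simp_all add: r_plus_def r_minus_def)

lemma r_minus_parabolic: "r_minus q 1 \<omega> = ereal (2 * q) / ereal (1 - cos \<omega>)"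
  by (simp add: r_minus_def mult.commute)

lemma le_Qprime: "0 \<le> q \<Longrightarrow> 0 \<le> e \<Longrightarrow> e < 1 \<Longrightarrow> q \<le> Qprime q e"
  by (simp add: Qprime_def le_divide_eq mult_left_mono)

lemma r_plus_denominator_bounds:
  fixes e :: real
  assumes "0 \<le> e"
  shows "1 - e \<le> 1 + e * cos \<omega>" "1 + e * cos \<omega> \<le> 1 + e"
proof -
  have "\<bar>e * cos \<omega>\<bar> \<le> e" using assms by (simp add: abs_mult mult_left_le)
  then show "1 - e \<le> 1 + e * cos \<omega>" "1 + e * cos \<omega> \<le> 1 + e" by (auto simp: abs_le_iff)
qed

lemma r_plus_ge:
  assumes "0 < q" "0 \<le> e" "e \<le> 1"
  shows "ereal q \<le> r_plus q e \<omega>"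
proof (cases "1 + e * cos \<omega> = 0")
  case True
  then show ?thesis using assms by (simp add: r_plus_def)
next
  case False
  then have "0 < 1 + e * cos \<omega>" using r_plus_denominator_bounds(1)[OF assms(2), of \<omega>] assms(3) by linarith
  moreover have "q * (1 + e * cos \<omega>) \<le> q * (1 + e)"
    using r_plus_denominator_bounds(2)[OF assms(2), of \<omega>] assms(1) by simp
  ultimately show ?thesis by (simp add: r_plus_def le_divide_eq)
qed

lemma r_minus_ge: "0 < q \<Longrightarrow> 0 \<le> e \<Longrightarrow> e \<le> 1 \<Longrightarrow> ereal q \<le> r_minus q e \<omega>"
  unfolding r_minus_eq_r_plus_opposite by (rule r_plus_ge)

lemma r_plus_le_Qprime:
  assumes "0 \<le> q" "0 \<le> e" "e < 1"
  shows "r_plus q e \<omega> \<le> ereal (Qprime q e)"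
proof -
  have "0 < 1 - e" "1 - e \<le> 1 + e * cos \<omega>"
    using assms r_plus_denominator_bounds(1)[of e \<omega>] by auto
  moreover have "0 \<le> q * (1 + e)" using assms by simp
  ultimately show ?thesis by (simp add: r_plus_def Qprime_def divide_left_mono)
qed

lemma r_minus_le_Qprime: "0 \<le> q \<Longrightarrow> 0 \<le> e \<Longrightarrow> e < 1 \<Longrightarrow> r_minus q e \<omega> \<le> ereal (Qprime q e)"
  unfolding r_minus_eq_r_plus_opposite by (rule r_plus_le_Qprime)

lemma r_plus_le_r_minus:
  assumes "0 < q" "0 \<le> e" "e \<le> 1" "0 \<le> cos \<omega>"
  shows "r_plus q e \<omega> \<le> r_minus q e \<omega>"
proof (cases "e * cos \<omega> = 1")
  case True
  then show ?thesis using assms by (simp add: r_minus_def)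
next
  case False
  moreover have "e * cos \<omega> \<le> 1" using assms by (simp add: mult_le_one)
  ultimately have "0 < 1 - e * cos \<omega>" by simp
  moreover have "1 - e * cos \<omega> \<le> 1 + e * cos \<omega>" "0 \<le> q * (1 + e)" using assms by simp_all
  ultimately show ?thesis by (simp add: r_plus_def r_minus_def divide_left_mono)
qed

lemma r_minus_le_parabolic:
  assumes "0 < q" "0 \<le> e" "e \<le> 1" "0 \<le> cos \<omega>"
  shows "r_minus q e \<omega> \<le> ereal (2 * q) / ereal (1 - cos \<omega>)"
proof (cases "cos \<omega> = 1")
  case True
  then show ?thesis using assms by simp
next
  case False
  define c where "c = cos \<omega>"
  have "c < 1" using False cos_le_one[of \<omega>] unfolding c_def by linarith
  moreover have "e * c \<le> c" using assms by (simp add: c_def mult_left_le_one_le)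
  moreover have "q * (1 + e) * (1 - c) \<le> 2 * q * (1 - e * c)"
  proof -
    have "2 * q * (1 - e * c) - q * (1 + e) * (1 - c) = q * ((1 - e) * (1 + c))"
      by (simp add: algebra_simps)
    moreover have "0 \<le> q * ((1 - e) * (1 + c))" using assms by (simp add: c_def)
    ultimately show ?thesis by linarith
  qed
  ultimately show ?thesis by (simp add: r_minus_def c_def[symmetric] field_simps)
qed

lemma r_plus_le_parabolic:
  "0 < q \<Longrightarrow> 0 \<le> e \<Longrightarrow> e \<le> 1 \<Longrightarrow> 0 \<le> cos \<omega> \<Longrightarrow>
    r_plus q e \<omega> \<le> ereal (2 * q) / ereal (1 - cos \<omega>)"
  using r_plus_le_r_minus r_minus_le_parabolic order.trans by blast

lemma delta_int_ge:
  assumes "0 < q'" "0 \<le> e'" "e' \<le> 1" "0 < q" "0 \<le> e" "e \<le> 1" "0 \<le> cos \<omega>"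
  shows "ereal q' - ereal (2 * q) / ereal (1 - cos \<omega>) \<le> delta_int q' e' q e \<omega> \<omega>'"
proof -
  have "ereal q' \<le> r_plus q' e' \<omega>'" "ereal q' \<le> r_minus q' e' \<omega>'"
    using r_plus_ge r_minus_ge assms by simp_all
  moreover have "r_plus q e \<omega> \<le> ereal (2 * q) / ereal (1 - cos \<omega>)"
    "r_minus q e \<omega> \<le> ereal (2 * q) / ereal (1 - cos \<omega>)"
    using r_plus_le_parabolic r_minus_le_parabolic assms by simp_all
  ultimately show ?thesis
    unfolding delta_int_def d_plus_def d_minus_def by (intro min.boundedI ereal_minus_mono)
qed

lemma delta_int_parabolic_at_pi:
  assumes "0 \<le> q'" "0 \<le> e'" "e' < 1" "0 < q" "0 \<le> cos \<omega>"
  shows "delta_int q' e' q 1 \<omega> pi = ereal q' - ereal (2 * q) / ereal (1 - cos \<omega>)"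
proof -
  have "ereal q' \<le> ereal (Qprime q' e')"
    using le_Qprime assms by simp
  moreover have "r_plus q 1 \<omega> \<le> r_minus q 1 \<omega>"
    using r_plus_le_r_minus assms by simp
  ultimately have "ereal q' - r_minus q 1 \<omega> \<le> ereal (Qprime q' e') - r_plus q 1 \<omega>"
    by (rule ereal_minus_mono)
  then show ?thesis
    using assms by (simp add: delta_int_def d_plus_def d_minus_def r_plus_pi r_minus_pi
      r_minus_parabolic min_def)
qed

lemma delta_ext_ge:
  assumes "0 \<le> q'" "0 \<le> e'" "e' < 1" "0 < q" "0 \<le> e" "e \<le> 1"
  shows "ereal (q - Qprime q' e') \<le> delta_ext q' e' q e \<omega> \<omega>'"
proof -
  have "r_plus q' e' \<omega>' \<le> ereal (Qprime q' e')" "r_minus q' e' \<omega>' \<le> ereal (Qprime q' e')"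
    using r_plus_le_Qprime r_minus_le_Qprime assms by simp_all
  moreover have "ereal q \<le> r_plus q e \<omega>" "ereal q \<le> r_minus q e \<omega>"
    using r_plus_ge r_minus_ge assms by simp_all
  ultimately have "d_plus q' e' q e \<omega> \<omega>' \<le> ereal (Qprime q' e') - ereal q"
    "d_minus q' e' q e \<omega> \<omega>' \<le> ereal (Qprime q' e') - ereal q"
    unfolding d_plus_def d_minus_def by (blast intro: ereal_minus_mono)+
  then have "- (ereal (Qprime q' e') - ereal q) \<le> - d_plus q' e' q e \<omega> \<omega>'"
    "- (ereal (Qprime q' e') - ereal q) \<le> - d_minus q' e' q e \<omega> \<omega>'"
    by (simp_all only: ereal_minus_le_minus)
  then show ?thesis unfolding delta_ext_def by simp
qed

lemma delta_ext_circular_at_pi: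
  assumes "0 \<le> q'" "0 \<le> e'" "e' < 1"
  shows "delta_ext q' e' q 0 \<omega> pi = ereal (q - Qprime q' e')"
proof -
  have "ereal q' \<le> ereal (Qprime q' e')"
    using le_Qprime assms by simp
  then show ?thesis
    using assms by (simp add: delta_ext_def d_plus_def d_minus_def r_plus_pi r_minus_pi
      r_plus_circular r_minus_circular min_def)
qed

lemma internal_nodes_iff_delta_int_pos:
  "internal_nodes q' e' q e \<omega> \<omega>' \<longleftrightarrow> 0 < delta_int q' e' q e \<omega> \<omega>'"
  by (simp add: internal_nodes_def delta_int_def)

lemma external_nodes_iff_delta_ext_pos:
  "external_nodes q' e' q e \<omega> \<omega>' \<longleftrightarrow> 0 < delta_ext q' e' q e \<omega> \<omega>'"
  by (simp add: external_nodes_def delta_ext_def ereal_uminus_less_reorder)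

lemma all_pos_iff_pos_at_minimizer:
  fixes f :: "'a \<Rightarrow> 'b \<Rightarrow> 'c::linorder"
  assumes "(a, b) \<in> S" "\<And>x y. (x, y) \<in> S \<Longrightarrow> f a b \<le> f x y"
  shows "(\<forall>(x, y)\<in>S. c < f x y) \<longleftrightarrow> c < f a b"
  using assms by (fastforce intro: order_less_le_trans)

lemma parabolic_bound_nonpos_iff:
  assumes "0 < q"
  shows "ereal q' - ereal (2 * q) / ereal (1 - cos \<omega>) \<le> 0 \<longleftrightarrow> q' * (1 - cos \<omega>) \<le> 2 * q"
proof (cases "cos \<omega> = 1")
  case True
  then show ?thesis using assms by simp
next
  case False
  then have "0 < 1 - cos \<omega>" using cos_le_one[of \<omega>] by linarith
  then show ?thesis by (simp add: le_divide_eq)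
qed

lemma d_minus_root_circular:
  assumes "0 < q'" "0 < e'" "e' < 1" "q' \<le> q" "q \<le> Qprime q' e'"
  shows "\<exists>\<omega>'\<in>{0..pi}. d_minus q' e' q 0 \<omega> \<omega>' = 0"
proof -
  define y where "y = (1 - q' * (1 + e') / q) / e'"
  have "q' * (1 + e') \<le> (1 + e') * q" using assms by (simp add: mult.commute mult_right_mono)
  then have "q' * (1 + e') / q \<le> 1 + e'" using assms by (simp add: pos_divide_le_eq)
  moreover have "1 - e' \<le> q' * (1 + e') / q" using assms by (simp add: Qprime_def field_simps)
  ultimately have y: "-1 \<le> y" "y \<le> 1" unfolding y_def using assms by (simp_all add: field_simps)
  have "1 - e' * y = q' * (1 + e') / q" unfolding y_def using assms by simp
  then have "r_minus q' e' (arccos y) = ereal q"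
    using assms y by (simp add: r_minus_def)
  then have "d_minus q' e' q 0 \<omega> (arccos y) = 0"
    by (simp add: d_minus_def r_minus_circular)
  moreover have "arccos y \<in> {0..pi}" using y by (simp add: arccos_lbound arccos_ubound)
  ultimately show ?thesis by blast
qed

lemma d_minus_root_at_pi:
  assumes "0 < q" "q < q'" "-1 < e'" "0 \<le> cos \<omega>" "q' * (1 - cos \<omega>) \<le> 2 * q"
  shows "\<exists>e\<in>{0..1}. d_minus q' e' q e \<omega> pi = 0"
proof -
  define c where "c = cos \<omega>"
  define e where "e = (q' - q) / (q + q' * c)"
  have den: "0 < q + q' * c" using assms by (simp add: c_def add_pos_nonneg)
  have e: "0 \<le> e" "e \<le> 1" using assms den by (simp_all add: e_def c_def field_simps)
  have "1 - e * c = q * (1 + c) / (q + q' * c)" "1 + e = q' * (1 + c) / (q + q' * c)"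
    using den by (simp_all add: e_def field_simps)
  moreover have "0 < 1 + c" using assms by (simp add: c_def)
  ultimately have "r_minus q e \<omega> = ereal q'"
    using assms den by (simp add: r_minus_def c_def[symmetric])
  then have "d_minus q' e' q e \<omega> pi = 0"
    using assms by (simp add: d_minus_def r_minus_pi)
  then show ?thesis using e by auto
qed

lemma d_minus_root:
  assumes "0 < q'" "0 < e'" "e' < 1" "0 < q" "0 \<le> cos \<omega>"
    and "q' * (1 - cos \<omega>) \<le> 2 * q" "q \<le> Qprime q' e'"
  shows "\<exists>(e, \<omega>')\<in>D1. d_minus q' e' q e \<omega> \<omega>' = 0"
proof (cases "q' \<le> q")
  case True
  then obtain \<omega>' where "\<omega>' \<in> {0..pi}" "d_minus q' e' q 0 \<omega> \<omega>' = 0"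
    using d_minus_root_circular[OF assms(1-3) True assms(7)] by blast
  then show ?thesis by (intro bexI[of _ "(0, \<omega>')"]) (auto simp: D1_def)
next
  case False
  moreover have "-1 < e'" using assms by simp
  ultimately obtain e where "e \<in> {0..1}" "d_minus q' e' q e \<omega> pi = 0"
    using d_minus_root_at_pi[OF assms(4) _ _ assms(5,6)] by (meson not_le)
  then show ?thesis by (intro bexI[of _ "(e, pi)"]) (auto simp: D1_def)
qed

theorem lemma3:
  fixes q' e' qmax :: real
  assumes "q' > 0" and "0 < e'" and "e' < 1" and "qmax > 0"
  shows "(\<forall>q \<omega> e \<omega>'. (q, \<omega>) \<in> D2 qmax \<longrightarrow> (e, \<omega>') \<in> D1 \<longrightarrow>
            delta_int q' e' q e \<omega> \<omega>' \<ge> delta_int q' e' q 1 \<omega> pi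
          \<and> delta_int q' e' q 1 \<omega> pi = ereal q' - ereal (2 * q) / ereal (1 - cos \<omega>)
          \<and> delta_ext q' e' q e \<omega> \<omega>' \<ge> delta_ext q' e' q 0 \<omega> pi
          \<and> delta_ext q' e' q 0 \<omega> pi = ereal (q - Qprime q' e'))
    \<and> (\<forall>q \<omega>. (q, \<omega>) \<in> D2 qmax \<longrightarrow>
          ((\<forall>(e, \<omega>') \<in> D1. internal_nodes q' e' q e \<omega> \<omega>')
             \<longleftrightarrow> ereal q' - ereal (2 * q) / ereal (1 - cos \<omega>) > 0)
        \<and> ((\<forall>(e, \<omega>') \<in> D1. external_nodes q' e' q e \<omega> \<omega>')
             \<longleftrightarrow> q - Qprime q' e' > 0))
    \<and> (\<forall>q \<omega>. (q, \<omega>) \<in> D2 qmax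
          \<longrightarrow> ereal q' - ereal (2 * q) / ereal (1 - cos \<omega>) \<le> 0
          \<longrightarrow> q - Qprime q' e' \<le> 0
          \<longrightarrow> (\<exists>(e, \<omega>') \<in> D1. d_plus q' e' q e \<omega> \<omega>' * d_minus q' e' q e \<omega> \<omega>' = 0))"
proof -
  have D1_pi: "(1, pi) \<in> D1" "(0, pi) \<in> D1" by (simp_all add: D1_def)
  have D2: "0 < q" "0 \<le> cos \<omega>" if "(q, \<omega>) \<in> D2 qmax" for q \<omega>
    using that by (auto simp: D2_def intro: cos_ge_zero)
  have int_val: "delta_int q' e' q 1 \<omega> pi = ereal q' - ereal (2 * q) / ereal (1 - cos \<omega>)"
    if "(q, \<omega>) \<in> D2 qmax" for q \<omega>
    using assms D2[OF that] by (simp add: delta_int_parabolic_at_pi)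
  have ext_val: "delta_ext q' e' q 0 \<omega> pi = ereal (q - Qprime q' e')" for q \<omega>
    using assms by (simp add: delta_ext_circular_at_pi)
  have int_min: "delta_int q' e' q 1 \<omega> pi \<le> delta_int q' e' q e \<omega> \<omega>'"
    and ext_min: "delta_ext q' e' q 0 \<omega> pi \<le> delta_ext q' e' q e \<omega> \<omega>'"
    if "(q, \<omega>) \<in> D2 qmax" "(e, \<omega>') \<in> D1" for q \<omega> e \<omega>'
    using that(2) assms D2[OF that(1)] int_val[OF that(1)] ext_val
      delta_int_ge[of q' e' q e \<omega> \<omega>'] delta_ext_ge[of q' e' q e \<omega> \<omega>']
    by (simp_all add: D1_def)
  have nodes: "((\<forall>(e, \<omega>') \<in> D1. internal_nodes q' e' q e \<omega> \<omega>')
        \<longleftrightarrow> ereal q' - ereal (2 * q) / ereal (1 - cos \<omega>) > 0)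
      \<and> ((\<forall>(e, \<omega>') \<in> D1. external_nodes q' e' q e \<omega> \<omega>') \<longleftrightarrow> q - Qprime q' e' > 0)"
    if "(q, \<omega>) \<in> D2 qmax" for q \<omega>
    using all_pos_iff_pos_at_minimizer[where f = "\<lambda>e \<omega>'. delta_int q' e' q e \<omega> \<omega>'",
        OF D1_pi(1) int_min[OF that]]
      all_pos_iff_pos_at_minimizer[where f = "\<lambda>e \<omega>'. delta_ext q' e' q e \<omega> \<omega>'",
        OF D1_pi(2) ext_min[OF that]]
    by (simp add: internal_nodes_iff_delta_int_pos external_nodes_iff_delta_ext_pos
        int_val[OF that] ext_val)
  have root: "\<exists>(e, \<omega>') \<in> D1. d_plus q' e' q e \<omega> \<omega>' * d_minus q' e' q e \<omega> \<omega>' = 0"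
    if q\<omega>: "(q, \<omega>) \<in> D2 qmax"
      and bounds: "ereal q' - ereal (2 * q) / ereal (1 - cos \<omega>) \<le> 0" "q - Qprime q' e' \<le> 0"
    for q \<omega>
  proof -
    have "q' * (1 - cos \<omega>) \<le> 2 * q" "q \<le> Qprime q' e'"
      using bounds parabolic_bound_nonpos_iff D2[OF q\<omega>] by auto
    then obtain e \<omega>' where "(e, \<omega>') \<in> D1" "d_minus q' e' q e \<omega> \<omega>' = 0"
      using d_minus_root[OF assms(1-3) D2[OF q\<omega>]] by blast
    then show ?thesis by auto
  qed
  show ?thesis
    using int_min int_val ext_min ext_val nodes root by blast
qed

end
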